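(* Let $M,K$ be symmetric positive definite $d\times d$ matrices and $H(q,p)=\frac12p^TM^{-1}p+\frac12q^TKq$. Write $M=LL^T$ and $U^TL^{-1}KL^{-T}U=\Omega^2=\mathrm{diag}(\omega_1^2,\dots,\omega_d^2)$ with $U$ orthogonal and $\omega_i>0$, and introduce modal variables by $q=L^{-T}U\Omega^{-1}Q$, $p=LUP$ (so $H=\frac12\sum_i((P^i)^2+(Q^i)^2)$). For $k>0$ let $\tilde M(k)=\begin{bmatrix}\cos\theta(k)&\chi(k)\sin\theta(k)\\-\chi(k)^{-1}\sin\theta(k)&\cos\theta(k)\end{bmatrix}$ with $\theta(k)\in\mathbb{R}$, $\chi(k)\ne0$, and set $\rho(k)=\frac12(\chi(k)-\chi(k)^{-1})^2$. Suppose a numerical map $\psi_h$ acts in the modal variables by $(Q^i,P^i)\mapsto\tilde M(\omega_ih)(Q^i,P^i)^T$ independently for each $i$ (as is the case for a consistent reversible volume-preserving integrator such as a palindromic splitting method applied with stable step size $h$, $\tilde M(k)$ being its one-step matrix with step $k$ for the oscillator $dq/dt=p,dp/dt=-q$). If $(q_0,p_0)$ has density $\propto e^{-H}$ and $(q_n,p_n)=\psi_h^n(q_0,p_0)$, then for every $n$ $$0\le\mathbb{E}\big(H(q_n,p_n)-H(q_0,p_0)\big)\le\sum_{j=1}^d\rho(\omega_jh).$$ *)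

theory Defs
  imports "HOL-Analysis.Analysis"
begin

definition sym_pos_def :: "real^'n^'n \<Rightarrow> bool" where
  "sym_pos_def A \<longleftrightarrow> transpose A = A \<and> (\<forall>x. x \<noteq> 0 \<longrightarrow> x \<bullet> (A *v x) > 0)"

definition Ham :: "real^'n^'n \<Rightarrow> real^'n^'n \<Rightarrow> (real^'n) \<times> (real^'n) \<Rightarrow> real" where
  "Ham M K z = (1/2) * (snd z \<bullet> (matrix_inv M *v snd z)) + (1/2) * (fst z \<bullet> (K *v fst z))"

text \<open>Modal variables: from q = L^{-T} U Omega^{-1} Q we get Q = Omega U^T L^T q;
  from p = L U P we get P = U^T L^{-1} p.\<close>
definition modal_Q :: "real^'n^'n \<Rightarrow> real^'n^'n \<Rightarrow> ('n \<Rightarrow> real) \<Rightarrow> (real^'n) \<times> (real^'n) \<Rightarrow> real^'n" where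
  "modal_Q L U \<omega> z = (\<chi> i. \<omega> i * ((transpose U ** transpose L) *v fst z) $ i)"

definition modal_P :: "real^'n^'n \<Rightarrow> real^'n^'n \<Rightarrow> (real^'n) \<times> (real^'n) \<Rightarrow> real^'n" where
  "modal_P L U z = (transpose U ** matrix_inv L) *v snd z"

definition rho :: "(real \<Rightarrow> real) \<Rightarrow> real \<Rightarrow> real" where
  "rho chi k = (1/2) * (chi k - 1 / chi k)^2"

end

theory Submission
  imports Defs
begin

text \<open>
  In the modal coordinates \<open>w = T z\<close>, \<open>T = modal_map L U \<omega>\<close>, the Hamiltonian is \<open>|w|\<^sup>2 / 2\<close>
  and \<open>\<psi>\<^sup>n\<close> acts by the linear map \<open>R\<close> rotating each mode \<open>(Q\<^sup>i, P\<^sup>i)\<close> with angle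
  \<open>n \<theta>(\<omega>\<^sub>i h)\<close>. Since the coordinates of \<open>T z\<close> are uncorrelated with unit variance under the
  weight \<open>exp (- |T z|\<^sup>2 / 2)\<close>, the expected energy error is
  \<open>\<Sum>\<^sub>b (|R b|\<^sup>2 - 1) / 2 = \<Sum>\<^sub>i sin\<^sup>2 (n \<theta>(\<omega>\<^sub>i h)) \<rho>(\<omega>\<^sub>i h)\<close>, which lies between 0 and
  \<open>\<Sum>\<^sub>i \<rho>(\<omega>\<^sub>i h)\<close>.

  The covariance is obtained without evaluating any Gaussian integral: translation invariance of
  Lebesgue measure (exponential tilting) bounds every second moment \<open>E (e \<bullet> T z)\<^sup>2\<close> by \<open>|e|\<^sup>2\<close>,
  scaling invariance bounds \<open>E |T z|\<^sup>2\<close> from below by the dimension, and together these force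
  the identity covariance.
\<close>

section \<open>Affine substitution in Lebesgue integrals\<close>

lemma nn_integral_lborel_affine:
  fixes f :: "'a::euclidean_space \<Rightarrow> ennreal" and c :: real
  assumes [measurable]: "f \<in> borel_measurable borel" and c: "c \<noteq> 0"
  shows "(\<integral>\<^sup>+x. f x \<partial>lborel) = ennreal (\<bar>c\<bar>^DIM('a)) * (\<integral>\<^sup>+x. f (t + c *\<^sub>R x) \<partial>lborel)"
  by (subst lborel_affine[OF c, of t])
     (simp add: nn_integral_density nn_integral_distr nn_integral_cmult)

lemma lborel_integrable_affine:
  fixes f :: "'a::euclidean_space \<Rightarrow> real"
  assumes f: "integrable lborel f" and c: "c \<noteq> 0"
  shows "integrable lborel (\<lambda>x. f (t + c *\<^sub>R x))"
proof -
  have [measurable]: "f \<in> borel_measurable borel" using f by auto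
  show ?thesis
    using f c unfolding integrable_iff_bounded
    by (subst (asm) nn_integral_lborel_affine[where c=c and t=t]) (auto simp: ennreal_mult_less_top)
qed

lemma lborel_integrable_affine_iff:
  fixes f :: "'a::euclidean_space \<Rightarrow> real"
  assumes c: "c \<noteq> 0"
  shows "integrable lborel (\<lambda>x. f (t + c *\<^sub>R x)) \<longleftrightarrow> integrable lborel f"
proof
  assume "integrable lborel (\<lambda>x. f (t + c *\<^sub>R x))"
  from lborel_integrable_affine[OF this, of "1/c" "- t /\<^sub>R c"] c
  show "integrable lborel f" by (simp add: algebra_simps)
qed (rule lborel_integrable_affine[OF _ c])

lemma lborel_integral_affine:
  fixes f :: "'a::euclidean_space \<Rightarrow> real" and c :: real
  assumes c: "c \<noteq> 0"
  shows "(\<integral>x. f x \<partial>lborel) = \<bar>c\<bar>^DIM('a) * (\<integral>x. f (t + c *\<^sub>R x) \<partial>lborel)"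
proof cases
  assume f[measurable]: "integrable lborel f"
  then show ?thesis
    using c f[THEN borel_measurable_integrable] lborel_integrable_affine[OF f c, of t]
    by (subst lborel_affine[OF c, of t]) (simp add: integral_density integral_distr)
next
  assume "\<not> integrable lborel f"
  with c show ?thesis
    by (simp add: lborel_integrable_affine_iff not_integrable_integral_eq)
qed

section \<open>Second moments of a Gaussian weight\<close>

lemma exp_plus_exp_minus_ge: "2 + x\<^sup>2 \<le> exp x + exp (- x :: real)"
proof -
  have "\<bar>x / 2\<bar> \<le> \<bar>sinh (x / 2)\<bar>"
    using real_le_abs_sinh[of "x / 2"] by (simp add: sinh_field_def exp_minus)
  then have "(x / 2)\<^sup>2 \<le> (sinh (x / 2))\<^sup>2"
    by (simp only: abs_le_square_iff)
  moreover have "cosh x = 1 + 2 * (sinh (x / 2))\<^sup>2"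
    using cosh_double[of "x / 2"] by (simp add: cosh_square_eq)
  ultimately show ?thesis
    by (simp add: cosh_field_def power_divide)
qed

definition gaussian_weight :: "('a \<Rightarrow> 'b::real_inner) \<Rightarrow> 'a \<Rightarrow> real" where
  "gaussian_weight T z = exp (- (T z \<bullet> T z) / 2)"

lemma gaussian_weight_nonneg: "0 \<le> gaussian_weight T z"
  by (simp add: gaussian_weight_def)

context
  fixes T :: "'a::euclidean_space \<Rightarrow> 'b::euclidean_space"
  assumes T: "linear T"
begin

lemma borel_measurable_linear[measurable]: "T \<in> borel_measurable borel"
  using T by (simp add: linear_conv_bounded_linear borel_measurable_continuous_onI
      linear_continuous_on)

lemma borel_measurable_gaussian_weight[measurable]: "gaussian_weight T \<in> borel_measurable borel"
  unfolding gaussian_weight_def by measurable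

lemma
  assumes "surj T" and "integrable lborel (gaussian_weight T)"
  shows integrable_gaussian_tilt: "integrable lborel (\<lambda>z. exp (s * (e \<bullet> T z)) * gaussian_weight T z)"
    and integral_gaussian_tilt: "(\<integral>z. exp (s * (e \<bullet> T z)) * gaussian_weight T z \<partial>lborel)
      = exp (s\<^sup>2 * (e \<bullet> e) / 2) * (\<integral>z. gaussian_weight T z \<partial>lborel)"
proof -
  obtain c where c: "T c = s *\<^sub>R e"
    using \<open>surj T\<close> by (metis surjD)
  define f where "f z = exp (s * (e \<bullet> T z)) * gaussian_weight T z" for z
  \<comment> \<open>Completing the square: translation by \<open>c\<close> turns the tilted weight into a multiple of the weight.\<close>
  have f_shift: "f (c + 1 *\<^sub>R z) = exp (s\<^sup>2 * (e \<bullet> e) / 2) * gaussian_weight T z" for z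
  proof -
    have "T (c + 1 *\<^sub>R z) = s *\<^sub>R e + T z"
      using T c by (simp add: linear_add)
    then have "s * (e \<bullet> T (c + 1 *\<^sub>R z)) - T (c + 1 *\<^sub>R z) \<bullet> T (c + 1 *\<^sub>R z) / 2
        = s\<^sup>2 * (e \<bullet> e) / 2 - T z \<bullet> T z / 2"
      by (simp add: inner_add_left inner_add_right inner_commute[of "T z" e] power2_eq_square
          field_simps)
    then show ?thesis
      unfolding f_def gaussian_weight_def by (simp add: exp_add[symmetric])
  qed
  have "integrable lborel (\<lambda>z. f (c + 1 *\<^sub>R z))"
    unfolding f_shift using assms(2) by simp
  then have "integrable lborel f"
    using lborel_integrable_affine_iff[of 1 f c] by simp
  then show "integrable lborel (\<lambda>z. exp (s * (e \<bullet> T z)) * gaussian_weight T z)"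
    by (simp add: f_def[abs_def])
  show "(\<integral>z. exp (s * (e \<bullet> T z)) * gaussian_weight T z \<partial>lborel)
      = exp (s\<^sup>2 * (e \<bullet> e) / 2) * (\<integral>z. gaussian_weight T z \<partial>lborel)"
    using lborel_integral_affine[of 1 f c] unfolding f_shift by (simp add: f_def)
qed

lemma
  assumes "surj T" and int: "integrable lborel (gaussian_weight T)"
  shows integrable_gaussian_second_moment:
      "integrable lborel (\<lambda>z. (e \<bullet> T z)\<^sup>2 * gaussian_weight T z)"
    and gaussian_second_moment_cosh_bound:
      "s\<^sup>2 * (\<integral>z. (e \<bullet> T z)\<^sup>2 * gaussian_weight T z \<partial>lborel)
        \<le> 2 * (exp (s\<^sup>2 * (e \<bullet> e) / 2) - 1) * (\<integral>z. gaussian_weight T z \<partial>lborel)"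
proof -
  define C where "C s z = exp (s * (e \<bullet> T z)) * gaussian_weight T z
    + exp ((- s) * (e \<bullet> T z)) * gaussian_weight T z" for s z
  have tilt_int: "integrable lborel (\<lambda>z. exp (t * (e \<bullet> T z)) * gaussian_weight T z)" for t
    by (rule integrable_gaussian_tilt[OF assms])
  have C_int: "integrable lborel (C s)" for s
    unfolding C_def[abs_def] by (intro Bochner_Integration.integrable_add tilt_int)
  have C_integral: "(\<integral>z. C s z \<partial>lborel)
      = 2 * exp (s\<^sup>2 * (e \<bullet> e) / 2) * (\<integral>z. gaussian_weight T z \<partial>lborel)" for s
    unfolding C_def[abs_def] Bochner_Integration.integral_add[OF tilt_int tilt_int]
      integral_gaussian_tilt[OF assms]
    by simp
  have C_ge: "(s * (e \<bullet> T z))\<^sup>2 * gaussian_weight T z \<le> C s z - 2 * gaussian_weight T z" for s z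
    using mult_right_mono[OF exp_plus_exp_minus_ge[of "s * (e \<bullet> T z)"] gaussian_weight_nonneg]
    by (simp add: C_def algebra_simps)
  show moment_int: "integrable lborel (\<lambda>z. (e \<bullet> T z)\<^sup>2 * gaussian_weight T z)"
  proof (rule Bochner_Integration.integrable_bound[OF C_int[of 1]])
    show "(\<lambda>z. (e \<bullet> T z)\<^sup>2 * gaussian_weight T z) \<in> borel_measurable lborel"
      by measurable
    show "AE z in lborel. norm ((e \<bullet> T z)\<^sup>2 * gaussian_weight T z) \<le> norm (C 1 z)"
    proof (rule AE_I2)
      fix z
      show "norm ((e \<bullet> T z)\<^sup>2 * gaussian_weight T z) \<le> norm (C 1 z)"
        using C_ge[of 1 z] gaussian_weight_nonneg[of T z] abs_ge_self[of "C 1 z"] by simp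
    qed
  qed
  have "s\<^sup>2 * (\<integral>z. (e \<bullet> T z)\<^sup>2 * gaussian_weight T z \<partial>lborel)
      = (\<integral>z. (s * (e \<bullet> T z))\<^sup>2 * gaussian_weight T z \<partial>lborel)"
    by (simp add: power_mult_distrib mult.assoc)
  also have "\<dots> \<le> (\<integral>z. C s z - 2 * gaussian_weight T z \<partial>lborel)"
    using moment_int int C_int C_ge
    by (intro integral_mono) (auto simp: power_mult_distrib mult.assoc)
  also have "\<dots> = 2 * (exp (s\<^sup>2 * (e \<bullet> e) / 2) - 1) * (\<integral>z. gaussian_weight T z \<partial>lborel)"
    using C_int int by (simp add: C_integral algebra_simps)
  finally show "s\<^sup>2 * (\<integral>z. (e \<bullet> T z)\<^sup>2 * gaussian_weight T z \<partial>lborel)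
      \<le> 2 * (exp (s\<^sup>2 * (e \<bullet> e) / 2) - 1) * (\<integral>z. gaussian_weight T z \<partial>lborel)" .
qed

lemma gaussian_second_moment_le:
  assumes "surj T" and "integrable lborel (gaussian_weight T)"
  shows "(\<integral>z. (e \<bullet> T z)\<^sup>2 * gaussian_weight T z \<partial>lborel)
    \<le> (e \<bullet> e) * (\<integral>z. gaussian_weight T z \<partial>lborel)"
proof -
  define \<sigma> where "\<sigma> = e \<bullet> e"
  define Z where "Z = (\<integral>z. gaussian_weight T z \<partial>lborel)"
  define I where "I = (\<integral>z. (e \<bullet> T z)\<^sup>2 * gaussian_weight T z \<partial>lborel)"
  note bound = gaussian_second_moment_cosh_bound[OF assms, of _ e, folded \<sigma>_def Z_def I_def]
  have I_le: "I \<le> \<sigma> * Z * ((exp u - 1) / u)" if "0 < u" for u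
  proof (cases "\<sigma> = 0")
    case True
    then show ?thesis using bound[of 1] by simp
  next
    case False
    then have "0 < \<sigma>" by (simp add: \<sigma>_def)
    then have "(2 * u / \<sigma>) * I \<le> 2 * (exp u - 1) * Z"
      using bound[of "sqrt (2 * u / \<sigma>)"] \<open>0 < u\<close> by simp
    then show ?thesis
      using \<open>0 < \<sigma>\<close> \<open>0 < u\<close> by (simp add: field_simps)
  qed
  have "((\<lambda>u::real. (exp u - 1) / u) \<longlongrightarrow> 1) (at 0)"
    using DERIV_exp[of "0::real"] by (simp add: DERIV_def)
  then have "((\<lambda>u::real. (exp u - 1) / u) \<longlongrightarrow> 1) (at_right 0)"
    using filterlim_at_split by blast
  then have "((\<lambda>u. \<sigma> * Z * ((exp u - 1) / u)) \<longlongrightarrow> \<sigma> * Z * 1) (at_right 0)"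
    by (rule tendsto_mult_left)
  moreover have "eventually (\<lambda>u. I \<le> \<sigma> * Z * ((exp u - 1) / u)) (at_right 0)"
    by (rule eventually_at_rightI[of 0 1], rule I_le) auto
  ultimately have "I \<le> \<sigma> * Z * 1"
    by (rule tendsto_lowerbound) simp
  then show ?thesis
    by (simp add: I_def \<sigma>_def Z_def)
qed

lemma integrable_gaussian_product:
  assumes "surj T" and "integrable lborel (gaussian_weight T)"
  shows "integrable lborel (\<lambda>z. (u \<bullet> T z) * (v \<bullet> T z) * gaussian_weight T z)"
proof -
  have "(u \<bullet> T z) * (v \<bullet> T z) * gaussian_weight T z
      = (((u + v) \<bullet> T z)\<^sup>2 * gaussian_weight T z - (u \<bullet> T z)\<^sup>2 * gaussian_weight T z
          - (v \<bullet> T z)\<^sup>2 * gaussian_weight T z) / 2" for z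
    by (simp add: inner_add_left power2_eq_square algebra_simps)
  then show ?thesis
    by (simp only: integrable_divide Bochner_Integration.integrable_diff
        integrable_gaussian_second_moment assms)
qed

lemma gaussian_energy_scaling_bound:
  assumes int: "integrable lborel (gaussian_weight T)"
    and intE: "integrable lborel (\<lambda>z. (T z \<bullet> T z) * gaussian_weight T z)"
    and "1 < t"
  shows "DIM('a) * (\<integral>z. gaussian_weight T z \<partial>lborel)
    \<le> (t + 1) * t ^ DIM('a) * (\<integral>z. (T z \<bullet> T z) * gaussian_weight T z \<partial>lborel) / 2"
proof -
  define Z where "Z = (\<integral>z. gaussian_weight T z \<partial>lborel)"
  define E where "E = (\<integral>z. (T z \<bullet> T z) * gaussian_weight T z \<partial>lborel)"
  define D where "D = DIM('a)"
  define X where "X = (t\<^sup>2 - 1) / 2 * E"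
  have "t \<noteq> 0" using \<open>1 < t\<close> by simp
  \<comment> \<open>Rescaling \<open>z\<close> by \<open>t\<close> divides the integral of the weight by \<open>t ^ D\<close>, while
    \<open>exp (- x) \<ge> 1 - x\<close> bounds the rescaled weight from below in terms of \<open>E\<close>.\<close>
  have weight_scaled: "gaussian_weight T (0 + t *\<^sub>R z)
      \<ge> gaussian_weight T z - (t\<^sup>2 - 1) / 2 * ((T z \<bullet> T z) * gaussian_weight T z)" for z
  proof -
    define x where "x = (T z \<bullet> T z) / 2"
    have "exp (- x) * (1 - (t\<^sup>2 - 1) * x) \<le> exp (- x) * exp (- ((t\<^sup>2 - 1) * x))"
      using exp_ge_add_one_self[of "- ((t\<^sup>2 - 1) * x)"] by (intro mult_left_mono) simp_all
    also have "\<dots> = exp (- (t\<^sup>2 * x))"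
      by (simp add: exp_add[symmetric] algebra_simps)
    finally show ?thesis
      using T by (simp add: gaussian_weight_def x_def linear_cmul power2_eq_square algebra_simps)
  qed
  have int_scaled: "integrable lborel (\<lambda>z. gaussian_weight T (0 + t *\<^sub>R z))"
    using lborel_integrable_affine_iff[OF \<open>t \<noteq> 0\<close>] int by blast
  have "Z - X
      = (\<integral>z. gaussian_weight T z - (t\<^sup>2 - 1) / 2 * ((T z \<bullet> T z) * gaussian_weight T z) \<partial>lborel)"
    using int intE by (simp add: Z_def E_def X_def)
  also have "\<dots> \<le> (\<integral>z. gaussian_weight T (0 + t *\<^sub>R z) \<partial>lborel)"
    using int intE int_scaled weight_scaled by (intro integral_mono) auto
  finally have "t ^ D * (Z - X) \<le> Z"
    using lborel_integral_affine[OF \<open>t \<noteq> 0\<close>, of "gaussian_weight T" 0] \<open>1 < t\<close>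
    by (simp add: Z_def D_def mult_left_mono)
  then have "Z * t ^ D - Z \<le> X * t ^ D"
    by (simp add: algebra_simps)
  moreover have "Z * (1 + D * (t - 1)) \<le> Z * t ^ D"
    using Bernoulli_inequality[of "t - 1" D] \<open>1 < t\<close>
    by (intro mult_left_mono) (auto simp: Z_def gaussian_weight_nonneg)
  ultimately have "(t - 1) * (D * Z) \<le> X * t ^ D"
    by (simp add: algebra_simps)
  also have "\<dots> = (t - 1) * ((t + 1) * t ^ D * E / 2)"
    by (simp add: X_def power2_eq_square field_simps)
  finally show ?thesis
    using \<open>1 < t\<close> by (simp add: Z_def E_def D_def)
qed

lemma gaussian_energy_ge:
  assumes "integrable lborel (gaussian_weight T)"
    and "integrable lborel (\<lambda>z. (T z \<bullet> T z) * gaussian_weight T z)"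
  shows "DIM('a) * (\<integral>z. gaussian_weight T z \<partial>lborel)
    \<le> (\<integral>z. (T z \<bullet> T z) * gaussian_weight T z \<partial>lborel)"
proof -
  define E where "E = (\<integral>z. (T z \<bullet> T z) * gaussian_weight T z \<partial>lborel)"
  have "((\<lambda>t. (t + 1) * t ^ DIM('a) * E / 2) \<longlongrightarrow> (1 + 1) * 1 ^ DIM('a) * E / 2) (at_right 1)"
    by (intro tendsto_intros) simp
  moreover have "eventually (\<lambda>t. DIM('a) * (\<integral>z. gaussian_weight T z \<partial>lborel)
      \<le> (t + 1) * t ^ DIM('a) * E / 2) (at_right 1)"
    unfolding E_def
    by (rule eventually_at_rightI[of 1 2], rule gaussian_energy_scaling_bound[OF assms]) auto
  ultimately have "DIM('a) * (\<integral>z. gaussian_weight T z \<partial>lborel) \<le> (1 + 1) * 1 ^ DIM('a) * E / 2"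
    by (rule tendsto_lowerbound) simp
  then show ?thesis
    by (simp add: E_def)
qed

end

context
  fixes T :: "'a::euclidean_space \<Rightarrow> 'a"
  assumes T: "linear T" and surj: "surj T" and int: "integrable lborel (gaussian_weight T)"
begin

lemma gaussian_second_moment_Basis:
  assumes "b \<in> Basis"
  shows "(\<integral>z. (b \<bullet> T z)\<^sup>2 * gaussian_weight T z \<partial>lborel) = (\<integral>z. gaussian_weight T z \<partial>lborel)"
proof -
  define Z where "Z = (\<integral>z. gaussian_weight T z \<partial>lborel)"
  define M where "M b = (\<integral>z. (b \<bullet> T z)\<^sup>2 * gaussian_weight T z \<partial>lborel)" for b
  note moment_int = integrable_gaussian_second_moment[OF T surj int]
  have M_le: "M b \<le> Z" if "b \<in> Basis" for b
    using gaussian_second_moment_le[OF T surj int, of b] that by (simp add: M_def Z_def)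
  have energy: "(T z \<bullet> T z) * gaussian_weight T z
      = (\<Sum>b\<in>Basis. (b \<bullet> T z)\<^sup>2 * gaussian_weight T z)" for z
    by (simp add: euclidean_inner[of "T z"] inner_commute power2_eq_square sum_distrib_right)
  have "DIM('a) * Z \<le> (\<Sum>b\<in>Basis. M b)"
    using gaussian_energy_ge[OF T int] moment_int
    unfolding energy M_def Z_def by (simp add: Bochner_Integration.integral_sum)
  then have "(\<Sum>b\<in>Basis. Z - M b) = 0"
    using M_le sum_nonneg[of Basis "\<lambda>b. Z - M b"] by (simp add: sum_subtractf)
  then have "Z - M b = 0"
    using M_le assms by (subst (asm) sum_nonneg_eq_0_iff) auto
  then show ?thesis
    by (simp add: M_def Z_def)
qed

lemma gaussian_covariance_Basis:
  assumes "u \<in> Basis" and "v \<in> Basis"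
  shows "(\<integral>z. (u \<bullet> T z) * (v \<bullet> T z) * gaussian_weight T z \<partial>lborel)
    = (u \<bullet> v) * (\<integral>z. gaussian_weight T z \<partial>lborel)"
proof (cases "u = v")
  case True
  then show ?thesis
    using gaussian_second_moment_Basis[OF assms(1)] assms(1) by (simp add: power2_eq_square)
next
  case False
  define Z where "Z = (\<integral>z. gaussian_weight T z \<partial>lborel)"
  define C where "C = (\<integral>z. (u \<bullet> T z) * (v \<bullet> T z) * gaussian_weight T z \<partial>lborel)"
  note moment_int = integrable_gaussian_second_moment[OF T surj int]
  have "u \<bullet> v = 0"
    using False assms by (simp add: inner_Basis)
  \<comment> \<open>Both \<open>u + v\<close> and \<open>u - v\<close> have squared norm 2, and the bound for them forces \<open>C = 0\<close>.\<close>
  have "s * C \<le> 0" for s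
  proof -
    have "((u + s *\<^sub>R v) \<bullet> T z)\<^sup>2 * gaussian_weight T z
        = (u \<bullet> T z)\<^sup>2 * gaussian_weight T z
          + (2 * s) * ((u \<bullet> T z) * (v \<bullet> T z) * gaussian_weight T z)
          + s\<^sup>2 * ((v \<bullet> T z)\<^sup>2 * gaussian_weight T z)" for z
      by (simp add: power2_eq_square algebra_simps)
    then have "(\<integral>z. ((u + s *\<^sub>R v) \<bullet> T z)\<^sup>2 * gaussian_weight T z \<partial>lborel) = Z + 2 * s * C + s\<^sup>2 * Z"
      using gaussian_second_moment_Basis assms moment_int
        integrable_gaussian_product[OF T surj int, of u v]
      by (simp add: Z_def C_def)
    moreover have "(u + s *\<^sub>R v) \<bullet> (u + s *\<^sub>R v) = 1 + s\<^sup>2"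
      using \<open>u \<bullet> v = 0\<close> assms by (simp add: inner_add_left inner_add_right inner_commute
          power2_eq_square)
    ultimately show ?thesis
      using gaussian_second_moment_le[OF T surj int, of "u + s *\<^sub>R v"]
      by (simp add: Z_def algebra_simps)
  qed
  from this[of 1] this[of "-1"] have "C = 0"
    by simp
  then show ?thesis
    by (simp add: C_def \<open>u \<bullet> v = 0\<close>)
qed

lemma
  fixes R :: "'a \<Rightarrow> 'b::euclidean_space"
  assumes R: "linear R"
  shows integrable_gaussian_quadratic:
      "integrable lborel (\<lambda>z. (R (T z) \<bullet> R (T z)) * gaussian_weight T z)"
    and integral_gaussian_quadratic:
      "(\<integral>z. (R (T z) \<bullet> R (T z)) * gaussian_weight T z \<partial>lborel)
        = (\<Sum>b\<in>Basis. R b \<bullet> R b) * (\<integral>z. gaussian_weight T z \<partial>lborel)"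
proof -
  have expand: "(R (T z) \<bullet> R (T z)) * gaussian_weight T z
      = (\<Sum>u\<in>Basis. \<Sum>v\<in>Basis. (R u \<bullet> R v) * ((u \<bullet> T z) * (v \<bullet> T z) * gaussian_weight T z))" for z
  proof -
    have R_expand: "R (T z) = (\<Sum>u\<in>Basis. (T z \<bullet> u) *\<^sub>R R u)"
      using linear_sum[OF R, of "\<lambda>u. (T z \<bullet> u) *\<^sub>R u" Basis]
      by (simp add: euclidean_representation linear_scale[OF R])
    have "R (T z) \<bullet> R (T z) = (\<Sum>u\<in>Basis. \<Sum>v\<in>Basis. (u \<bullet> T z) * (v \<bullet> T z) * (R u \<bullet> R v))"
      unfolding R_expand inner_sum_left inner_sum_right by (simp add: sum_distrib_left inner_commute mult_ac)
    then show ?thesis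
      by (simp add: sum_distrib_left sum_distrib_right mult_ac)
  qed
  note product_int = integrable_gaussian_product[OF T surj int]
  show "integrable lborel (\<lambda>z. (R (T z) \<bullet> R (T z)) * gaussian_weight T z)"
    unfolding expand by (intro Bochner_Integration.integrable_sum integrable_mult_right product_int)
  have "(\<integral>z. (R (T z) \<bullet> R (T z)) * gaussian_weight T z \<partial>lborel)
      = (\<Sum>u\<in>Basis. \<Sum>v\<in>Basis. (R u \<bullet> R v) * ((u \<bullet> v) * (\<integral>z. gaussian_weight T z \<partial>lborel)))"
    unfolding expand using product_int
    by (simp add: Bochner_Integration.integral_sum Bochner_Integration.integrable_sum
        gaussian_covariance_Basis)
  also have "\<dots> = (\<Sum>b\<in>Basis. R b \<bullet> R b) * (\<integral>z. gaussian_weight T z \<partial>lborel)"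
    unfolding sum_distrib_right
    by (intro sum.cong refl) (simp add: inner_Basis if_distrib if_distribR sum.delta cong: if_cong)
  finally show "(\<integral>z. (R (T z) \<bullet> R (T z)) * gaussian_weight T z \<partial>lborel)
      = (\<Sum>b\<in>Basis. R b \<bullet> R b) * (\<integral>z. gaussian_weight T z \<partial>lborel)" .
qed

lemma integral_gaussian_energy_change:
  fixes R :: "'a \<Rightarrow> 'b::euclidean_space"
  assumes R: "linear R"
  shows "(\<integral>z. (R (T z) \<bullet> R (T z) - T z \<bullet> T z) * gaussian_weight T z \<partial>lborel)
    = (\<Sum>b\<in>Basis. R b \<bullet> R b - 1) * (\<integral>z. gaussian_weight T z \<partial>lborel)"
proof -
  have "(\<Sum>b\<in>(Basis :: 'a set). b \<bullet> b) = DIM('a)"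
    by (simp add: inner_Basis cong: sum.cong)
  then show ?thesis
    using integrable_gaussian_quadratic[OF R] integral_gaussian_quadratic[OF R]
      integrable_gaussian_quadratic[OF linear_id] integral_gaussian_quadratic[OF linear_id]
    by (simp add: left_diff_distrib sum_subtractf)
qed

end

section \<open>Matrices and sums over the standard basis\<close>

lemma
  fixes A :: "'a::field^'n^'n"
  assumes "invertible A"
  shows matrix_inv_right: "A ** matrix_inv A = mat 1"
    and matrix_inv_left: "matrix_inv A ** A = mat 1"
proof -
  have "\<exists>A'. A ** A' = mat 1 \<and> A' ** A = mat 1"
    using assms by (simp add: invertible_def)
  then have "A ** matrix_inv A = mat 1 \<and> matrix_inv A ** A = mat 1"
    unfolding matrix_inv_def by (rule someI_ex)
  then show "A ** matrix_inv A = mat 1" "matrix_inv A ** A = mat 1"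
    by auto
qed

lemma matrix_inv_eq:
  fixes A B :: "'a::field^'n^'n"
  assumes "A ** B = mat 1"
  shows "matrix_inv A = B"
proof -
  have "invertible A"
    using assms invertible_right_inverse by blast
  have "matrix_inv A = matrix_inv A ** (A ** B)"
    by (simp add: assms)
  also have "\<dots> = B"
    by (simp add: matrix_mul_assoc matrix_inv_left[OF \<open>invertible A\<close>])
  finally show ?thesis .
qed

lemma inner_matrix_transpose_mult:
  fixes A B :: "real^'n^'m"
  shows "x \<bullet> ((transpose A ** B) *v y) = (A *v x) \<bullet> (B *v y)"
  using dot_lmul_matrix[of x "transpose A" "B *v y"]
  by (metis matrix_vector_mul_assoc transpose_matrix_vector transpose_transpose)

lemma invertible_factor_of_sym_pos:
  fixes M L :: "real^'n^'n"
  assumes "sym_pos_def M" and "M = L ** transpose L"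
  shows "invertible L"
proof -
  have "x = 0" if "transpose L *v x = 0" for x
  proof -
    have "M *v x = 0"
      using that assms(2) by (simp add: matrix_vector_mul_assoc[symmetric])
    then show "x = 0"
      using assms(1) unfolding sym_pos_def_def by force
  qed
  then have "invertible (transpose L)"
    by (simp add: invertible_left_inverse matrix_left_invertible_ker)
  then show ?thesis
    by (metis transpose_invertible transpose_transpose)
qed

lemma matrix_inv_mult_transpose:
  fixes L :: "real^'n^'n"
  assumes "invertible L"
  shows "matrix_inv (L ** transpose L) = transpose (matrix_inv L) ** matrix_inv L"
proof (rule matrix_inv_eq)
  have "(L ** transpose L) ** (transpose (matrix_inv L) ** matrix_inv L)
      = L ** transpose (matrix_inv L ** L) ** matrix_inv L"
    by (simp add: matrix_transpose_mul matrix_mul_assoc)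
  then show "(L ** transpose L) ** (transpose (matrix_inv L) ** matrix_inv L) = mat 1"
    using assms by (simp add: matrix_inv_left matrix_inv_right transpose_mat)
qed

lemma sum_Basis_prod:
  fixes f :: "'a::euclidean_space \<times> 'b::euclidean_space \<Rightarrow> 'c::comm_monoid_add"
  shows "(\<Sum>b\<in>Basis. f b) = (\<Sum>u\<in>Basis. f (u, 0)) + (\<Sum>v\<in>Basis. f (0, v))"
proof -
  have "inj_on (\<lambda>u. (u::'a, 0::'b)) Basis" and "inj_on (\<lambda>v. (0::'a, v::'b)) Basis"
    by (auto intro!: inj_onI)
  then show ?thesis
    unfolding Basis_prod_def
    by (subst sum.union_disjoint) (auto simp: sum.reindex)
qed

lemma sum_Basis_real_vec:
  fixes f :: "real^'n \<Rightarrow> 'c::comm_monoid_add"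
  shows "(\<Sum>b\<in>Basis. f b) = (\<Sum>i\<in>UNIV. f (axis i 1))"
proof -
  have Basis_eq: "(Basis :: (real^'n) set) = range (\<lambda>i. axis i 1)"
    by (auto simp: Basis_vec_def)
  have "inj (\<lambda>i::'n. axis i (1::real))"
    by (auto intro!: injI simp: axis_eq_axis)
  then show ?thesis
    unfolding Basis_eq sum.reindex[OF \<open>inj _\<close>] by (simp add: comp_def)
qed

section \<open>Modal coordinates and mode rotations\<close>

definition modal_map :: "real^'n^'n \<Rightarrow> real^'n^'n \<Rightarrow> ('n \<Rightarrow> real)
    \<Rightarrow> (real^'n) \<times> (real^'n) \<Rightarrow> (real^'n) \<times> (real^'n)" where
  "modal_map L U \<omega> z = (modal_Q L U \<omega> z, modal_P L U z)"

lemma linear_modal_map: "linear (modal_map L U \<omega>)"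
  by (rule linearI)
    (simp_all add: modal_map_def modal_Q_def modal_P_def matrix_vector_right_distrib
      matrix_vector_mult_scaleR vec_eq_iff algebra_simps)

lemma modal_P_energy:
  fixes M L U :: "real^'n^'n"
  assumes "invertible L" and "M = L ** transpose L" and "orthogonal_matrix U"
  shows "snd z \<bullet> (matrix_inv M *v snd z) = modal_P L U z \<bullet> modal_P L U z"
proof -
  have "transpose (transpose U ** matrix_inv L) ** (transpose U ** matrix_inv L)
      = transpose (matrix_inv L) ** (U ** transpose U) ** matrix_inv L"
    by (simp add: matrix_transpose_mul matrix_mul_assoc)
  also have "\<dots> = matrix_inv M"
    using assms by (simp add: orthogonal_matrix_def matrix_inv_mult_transpose)
  finally show ?thesis
    unfolding modal_P_def inner_matrix_transpose_mult[symmetric] by simp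
qed

lemma modal_Q_energy:
  fixes K L U :: "real^'n^'n"
  assumes L: "invertible L" and U: "orthogonal_matrix U"
    and diag: "transpose U ** matrix_inv L ** K ** transpose (matrix_inv L) ** U
      = (\<chi> i j. if i = j then (\<omega> i)\<^sup>2 else 0)"
  shows "fst z \<bullet> (K *v fst z) = modal_Q L U \<omega> z \<bullet> modal_Q L U \<omega> z"
proof -
  define A where "A = transpose U ** matrix_inv L"
  define B where "B = transpose U ** transpose L"
  define D :: "real^'n^'n" where "D = (\<chi> i j. if i = j then (\<omega> i)\<^sup>2 else 0)"
  have "transpose B ** A = L ** (U ** transpose U) ** matrix_inv L"
    by (simp add: A_def B_def matrix_transpose_mul matrix_mul_assoc)
  then have Bt_A: "transpose B ** A = mat 1"
    using L U by (simp add: orthogonal_matrix_def matrix_inv_right)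
  have At_B: "transpose A ** B = mat 1"
    using arg_cong[OF Bt_A, of transpose] by (simp add: matrix_transpose_mul transpose_mat)
  have A_K_At: "A ** K ** transpose A = D"
    using diag by (simp add: D_def A_def matrix_transpose_mul matrix_mul_assoc)
  have "K = (transpose B ** A) ** K ** (transpose A ** B)"
    by (simp add: Bt_A At_B)
  also have "\<dots> = transpose B ** (A ** K ** transpose A) ** B"
    by (simp add: matrix_mul_assoc)
  finally have K_eq: "K = transpose B ** D ** B"
    by (simp add: A_K_At)
  have "fst z \<bullet> (K *v fst z) = (B *v fst z) \<bullet> (D *v (B *v fst z))"
    using inner_matrix_transpose_mult[of "fst z" B "D ** B" "fst z"]
    by (simp add: K_eq matrix_mul_assoc matrix_vector_mul_assoc)
  also have "\<dots> = modal_Q L U \<omega> z \<bullet> modal_Q L U \<omega> z"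
    by (simp add: D_def B_def modal_Q_def inner_vec_def matrix_vector_mult_def if_distrib
        if_distribR sum.delta power2_eq_square mult_ac cong: if_cong)
  finally show ?thesis .
qed

lemma Ham_eq_modal_energy:
  fixes M K L U :: "real^'n^'n"
  assumes "invertible L" and "M = L ** transpose L" and "orthogonal_matrix U"
    and "transpose U ** matrix_inv L ** K ** transpose (matrix_inv L) ** U
      = (\<chi> i j. if i = j then (\<omega> i)\<^sup>2 else 0)"
  shows "Ham M K z = (modal_map L U \<omega> z \<bullet> modal_map L U \<omega> z) / 2"
  using assms by (simp add: Ham_def modal_map_def inner_Pair modal_P_energy modal_Q_energy)

lemma surj_modal_map:
  fixes L U :: "real^'n^'n"
  assumes L: "invertible L" and U: "orthogonal_matrix U" and \<omega>: "\<And>i. \<omega> i \<noteq> 0"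
  shows "surj (modal_map L U \<omega>)"
proof (rule surjI)
  fix w :: "(real^'n) \<times> (real^'n)"
  define Li where "Li = matrix_inv L"
  have L_Li: "L ** Li = mat 1" and Li_L: "Li ** L = mat 1"
    using L by (simp_all add: Li_def matrix_inv_right matrix_inv_left)
  have Ut_U: "transpose U ** U = mat 1"
    using U by (simp add: orthogonal_matrix_def)
  have "(transpose U ** transpose L) ** (transpose Li ** U) = transpose U ** transpose (Li ** L) ** U"
    by (simp add: matrix_transpose_mul matrix_mul_assoc)
  then have Q_inv: "(transpose U ** transpose L) ** (transpose Li ** U) = mat 1"
    by (simp add: Li_L transpose_mat Ut_U)
  have "(transpose U ** Li) ** (L ** U) = transpose U ** (Li ** L) ** U"
    by (simp add: matrix_mul_assoc)
  then have P_inv: "(transpose U ** Li) ** (L ** U) = mat 1"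
    by (simp add: Li_L Ut_U)
  show "modal_map L U \<omega> ((transpose Li ** U) *v (\<chi> i. fst w $ i / \<omega> i), (L ** U) *v snd w) = w"
    using \<omega> by (simp add: modal_map_def modal_Q_def modal_P_def Li_def[symmetric]
        matrix_vector_mul_assoc Q_inv P_inv vec_eq_iff prod_eq_iff)
qed

definition mode_rotation :: "('n \<Rightarrow> real) \<Rightarrow> ('n \<Rightarrow> real)
    \<Rightarrow> (real^'n) \<times> (real^'n) \<Rightarrow> (real^'n) \<times> (real^'n)" where
  "mode_rotation \<theta> c w =
    ((\<chi> i. cos (\<theta> i) * fst w $ i + c i * sin (\<theta> i) * snd w $ i),
     (\<chi> i. - (sin (\<theta> i) / c i) * fst w $ i + cos (\<theta> i) * snd w $ i))"

lemma linear_mode_rotation: "linear (mode_rotation \<theta> c)"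
  by (rule linearI) (simp_all add: mode_rotation_def vec_eq_iff algebra_simps)

lemma mode_rotation_zero: "mode_rotation (\<lambda>i. 0) c w = w"
  by (simp add: mode_rotation_def vec_eq_iff prod_eq_iff)

lemma mode_rotation_mode_rotation:
  assumes "\<And>i. c i \<noteq> 0"
  shows "mode_rotation \<theta> c (mode_rotation \<phi> c w) = mode_rotation (\<lambda>i. \<theta> i + \<phi> i) c w"
  using assms by (simp add: mode_rotation_def vec_eq_iff cos_add sin_add field_simps)

lemma mode_rotation_funpow:
  assumes "\<And>i. c i \<noteq> 0" and step: "\<And>z. T (\<psi> z) = mode_rotation \<theta> c (T z)"
  shows "T ((\<psi> ^^ n) z) = mode_rotation (\<lambda>i. n * \<theta> i) c (T z)"
proof (induction n)
  case 0
  then show ?case by (simp add: mode_rotation_zero)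
next
  case (Suc n)
  then show ?case
    by (simp add: step mode_rotation_mode_rotation assms(1) algebra_simps)
qed

lemma sum_Basis_mode_rotation:
  fixes \<theta> c :: "'n::finite \<Rightarrow> real"
  assumes "\<And>i. c i \<noteq> 0"
  shows "(\<Sum>b\<in>Basis. mode_rotation \<theta> c b \<bullet> mode_rotation \<theta> c b - 1)
    = (\<Sum>i\<in>UNIV. (sin (\<theta> i))\<^sup>2 * (c i - 1 / c i)\<^sup>2)"
proof -
  have "(mode_rotation \<theta> c (axis i 1, 0) \<bullet> mode_rotation \<theta> c (axis i 1, 0) - 1)
      + (mode_rotation \<theta> c (0, axis i 1) \<bullet> mode_rotation \<theta> c (0, axis i 1) - 1)
      = (sin (\<theta> i))\<^sup>2 * (c i - 1 / c i)\<^sup>2" for i :: 'n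
  proof -
    have "mode_rotation \<theta> c (axis i 1, 0) \<bullet> mode_rotation \<theta> c (axis i 1, 0)
        + mode_rotation \<theta> c (0, axis i 1) \<bullet> mode_rotation \<theta> c (0, axis i 1)
        = 2 * (cos (\<theta> i))\<^sup>2 + (sin (\<theta> i))\<^sup>2 * ((c i)\<^sup>2 + 1 / (c i)\<^sup>2)"
      by (simp add: mode_rotation_def inner_Pair inner_vec_def axis_def if_distrib if_distribR
          sum.delta power2_eq_square algebra_simps cong: if_cong)
    also have "\<dots> = 2 + (sin (\<theta> i))\<^sup>2 * (c i - 1 / c i)\<^sup>2"
      using assms[of i] unfolding cos_squared_eq by (simp add: power2_eq_square field_simps)
    finally show ?thesis
      by simp
  qed
  then show ?thesis
    by (simp add: sum_Basis_prod sum_Basis_real_vec sum.distrib[symmetric])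
qed


lemma integral_energy_change_modal:
  fixes M K L U :: "real^'n^'n"
  assumes L: "invertible L" and L_fact: "M = L ** transpose L" and U: "orthogonal_matrix U"
    and diag: "transpose U ** matrix_inv L ** K ** transpose (matrix_inv L) ** U
      = (\<chi> i j. if i = j then (\<omega> i)\<^sup>2 else 0)"
    and \<omega>: "\<And>i. \<omega> i \<noteq> 0" and c: "\<And>i. c i \<noteq> 0"
    and step: "\<And>z. modal_map L U \<omega> (\<psi> z) = mode_rotation \<theta> c (modal_map L U \<omega> z)"
    and int: "integrable lborel (\<lambda>z. exp (- Ham M K z))"
  shows "(LINT z|lborel. (Ham M K ((\<psi> ^^ n) z) - Ham M K z) * exp (- Ham M K z))
    = (\<Sum>i\<in>UNIV. (sin (n * \<theta> i))\<^sup>2 * (c i - 1 / c i)\<^sup>2) / 2 * (LINT z|lborel. exp (- Ham M K z))"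
proof -
  define T where "T = modal_map L U \<omega>"
  define R where "R = mode_rotation (\<lambda>i. n * \<theta> i) c"
  have Ham_T: "Ham M K z = (T z \<bullet> T z) / 2" for z
    unfolding T_def by (rule Ham_eq_modal_energy[OF L L_fact U diag])
  have weight: "exp (- Ham M K z) = gaussian_weight T z" for z
    by (simp add: Ham_T gaussian_weight_def)
  have "T ((\<psi> ^^ n) z) = R (T z)" for z
    unfolding R_def T_def using c step by (rule mode_rotation_funpow)
  then have energy_change: "(Ham M K ((\<psi> ^^ n) z) - Ham M K z) * exp (- Ham M K z)
      = (R (T z) \<bullet> R (T z) - T z \<bullet> T z) * gaussian_weight T z / 2" for z
    by (simp add: Ham_T gaussian_weight_def diff_divide_distrib)
  have "linear T" "surj T"
    unfolding T_def using linear_modal_map surj_modal_map[OF L U \<omega>] by simp_all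
  moreover have "integrable lborel (gaussian_weight T)"
    using int by (simp add: weight)
  ultimately have "(\<integral>z. (R (T z) \<bullet> R (T z) - T z \<bullet> T z) * gaussian_weight T z \<partial>lborel)
      = (\<Sum>b\<in>Basis. R b \<bullet> R b - 1) * (\<integral>z. gaussian_weight T z \<partial>lborel)"
    unfolding R_def using linear_mode_rotation by (rule integral_gaussian_energy_change)
  then show ?thesis
    unfolding energy_change R_def sum_Basis_mode_rotation[OF c] by (simp add: weight)
qed


theorem theorem6p2:
  fixes M K L U :: "real^'n^'n"
    and \<omega> :: "'n \<Rightarrow> real"
    and \<theta> chi :: "real \<Rightarrow> real"
    and h :: real
    and \<psi> :: "(real^'n) \<times> (real^'n) \<Rightarrow> (real^'n) \<times> (real^'n)"
    and n :: nat
  assumes M_spd: "sym_pos_def M"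
    and K_spd: "sym_pos_def K"
    and L_fact: "M = L ** transpose L"
    and U_orth: "orthogonal_matrix U"
    and diag: "transpose U ** matrix_inv L ** K ** transpose (matrix_inv L) ** U
               = (\<chi> i j. if i = j then (\<omega> i)^2 else 0)"
    and \<omega>_pos: "\<And>i. \<omega> i > 0"
    and h_pos: "h > 0"
    and chi_nz: "\<And>k. k > 0 \<Longrightarrow> chi k \<noteq> 0"
    and \<psi>_Q: "\<And>z i. modal_Q L U \<omega> (\<psi> z) $ i
               = cos (\<theta> (\<omega> i * h)) * modal_Q L U \<omega> z $ i
                 + chi (\<omega> i * h) * sin (\<theta> (\<omega> i * h)) * modal_P L U z $ i"
    and \<psi>_P: "\<And>z i. modal_P L U (\<psi> z) $ i
               = - (sin (\<theta> (\<omega> i * h)) / chi (\<omega> i * h)) * modal_Q L U \<omega> z $ i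
                 + cos (\<theta> (\<omega> i * h)) * modal_P L U z $ i"
  shows "let E = (LINT z|lborel. (Ham M K ((\<psi> ^^ n) z) - Ham M K z) * exp (- Ham M K z))
                 / (LINT z|lborel. exp (- Ham M K z))
         in 0 \<le> E \<and> E \<le> (\<Sum>j\<in>UNIV. rho chi (\<omega> j * h))"
proof -
  define c where "c i = chi (\<omega> i * h)" for i
  define S where "S = (\<Sum>i\<in>UNIV. (sin (n * \<theta> (\<omega> i * h)))\<^sup>2 * rho chi (\<omega> i * h))"
  have "0 \<le> S" "S \<le> (\<Sum>j\<in>UNIV. rho chi (\<omega> j * h))"
    unfolding S_def
    by (auto simp: rho_def abs_square_le_1 intro!: sum_nonneg sum_mono mult_left_le_one_le)
  moreover have "(LINT z|lborel. (Ham M K ((\<psi> ^^ n) z) - Ham M K z) * exp (- Ham M K z))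
      = S * (LINT z|lborel. exp (- Ham M K z))" if "integrable lborel (\<lambda>z. exp (- Ham M K z))"
  proof -
    have c_nz: "c i \<noteq> 0" for i
      using chi_nz \<omega>_pos h_pos by (simp add: c_def)
    have "modal_map L U \<omega> (\<psi> z) = mode_rotation (\<lambda>i. \<theta> (\<omega> i * h)) c (modal_map L U \<omega> z)" for z
      by (simp add: modal_map_def mode_rotation_def \<psi>_Q \<psi>_P c_def vec_eq_iff)
    from integral_energy_change_modal[OF invertible_factor_of_sym_pos[OF M_spd L_fact] L_fact
        U_orth diag _ c_nz this that]
    show ?thesis
      using \<omega>_pos by (simp add: S_def rho_def c_def sum_divide_distrib less_imp_neq[symmetric])
  qed
  moreover have "(LINT z|lborel. exp (- Ham M K z)) = 0"
    if "\<not> integrable lborel (\<lambda>z. exp (- Ham M K z))"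
    using that by (simp add: not_integrable_integral_eq)
  ultimately show ?thesis
    by (cases "integrable lborel (\<lambda>z. exp (- Ham M K z))";
        cases "(LINT z|lborel. exp (- Ham M K z)) = 0") (simp_all add: Let_def)
qed

end
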